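(* Fix $T>0$ and $d\in\{1,2,3\}$. There is a constant $\tilde C_u^{(d)}$ depending only on $d$ and $T$ such that $$\int_0^t\int_{\mathbb R^d}\big|K^{\mathrm{LKS}}_{t-s;x}-K^{\mathrm{LKS}}_{r-s;x}\big|^2dx\,ds\le\tilde C_u^{(d)}(t-r)^{\frac{4-d}{4}},\qquad 0<r<t\le T,$$ with the convention $K^{\mathrm{LKS}}_{t;x}=0$ for $t<0$. The same estimate holds, with a possibly different constant, with $K^{\mathrm{LKS}}$ replaced by $K^{\mathrm{SFO}}$.
   Context: $K^{\mathrm{LKS}}_{t;x}=(2\pi)^{-d}\int_{\mathbb R^d}e^{-\frac t8(-2+|\xi|^2)^2}\cos(\xi\cdot x)d\xi$ and $K^{\mathrm{SFO}}_{t;x}=(2\pi)^{-d}\int_{\mathbb R^d}e^{-\frac t8|\xi|^4}\cos(\xi\cdot x)d\xi$, $t>0$. *)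

theory Defs
  imports "HOL-Analysis.Analysis"
begin

text \<open>Kernels on R^d, with d = CARD('n); convention K_t = 0 for t < 0.
  The xi-integral is the Lebesgue (Bochner) integral over lborel.\<close>

definition K_LKS :: "real \<Rightarrow> real ^ 'n \<Rightarrow> real" where
  "K_LKS t x = (if t < 0 then 0 else
     (1 / (2 * pi) ^ CARD('n)) *
     (\<integral> \<xi>. exp (- (t / 8) * (- 2 + (norm \<xi>)^2)^2) * cos (\<xi> \<bullet> x) \<partial>lborel))"

definition K_SFO :: "real \<Rightarrow> real ^ 'n \<Rightarrow> real" where
  "K_SFO t x = (if t < 0 then 0 else
     (1 / (2 * pi) ^ CARD('n)) *
     (\<integral> \<xi>. exp (- (t / 8) * (norm \<xi>)^4) * cos (\<xi> \<bullet> x) \<partial>lborel))"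

end

theory Submission
  imports Defs "HOL-Probability.Probability" "HOL-Real_Asymp.Real_Asymp"
begin

(* By Plancherel, the x-integral of a squared kernel increment is (2 pi)^(-d) times the xi-integral
   of the squared increment of the symbol exp (- tau psi xi), extended by 0 for tau < 0. Integrating
   first in s, the time integral of that increment is at most 3 h / (1 + h psi xi), where h = t - r.
   Both symbols dominate a multiple of |xi|^4 outside a ball, so the xi-integral of h / (1 + h psi xi)
   is at most h |B_R| + h (h kappa)^(-d/4) times the integral of (1 + |xi|^4)^(-1), which is finite
   exactly when d <= 3; this gives the order h^((4 - d)/4).
   Only the inequality half of Plancherel is needed. It is obtained by inserting a Gaussian weight,
   whose Fourier transform is explicit, bounding the resulting double integral by the Schur test,
   and letting the width of the Gaussian tend to infinity. *)

section \<open>Integrals over products\<close>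

lemma integral_lborel_prod_Basis:
  fixes f :: "'a::euclidean_space \<Rightarrow> real \<Rightarrow> complex"
  assumes int: "\<And>b. b \<in> Basis \<Longrightarrow> integrable lborel (f b)"
  shows integrable_lborel_prod_Basis:
      "integrable (lborel::'a measure) (\<lambda>x. \<Prod>b\<in>Basis. f b (x \<bullet> b))"
    and "(\<integral>x. (\<Prod>b\<in>Basis. f b (x \<bullet> b)) \<partial>(lborel::'a measure)) = (\<Prod>b\<in>Basis. integral\<^sup>L lborel (f b))"
proof -
  interpret product_sigma_finite "\<lambda>_. lborel::real measure" by standard
  let ?T = "\<lambda>g::'a\<Rightarrow>real. \<Sum>b\<in>Basis. g b *\<^sub>R b"
  have [measurable]: "f b \<in> borel_measurable borel" if "b \<in> Basis" for b
    using borel_measurable_integrable[OF int[OF that]] by simp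
  have [measurable]: "?T \<in> (\<Pi>\<^sub>M b\<in>Basis. lborel) \<rightarrow>\<^sub>M borel"
    by measurable
  have coord: "(\<Prod>b\<in>Basis. f b (?T g \<bullet> b)) = (\<Prod>b\<in>Basis. f b (g b))" for g
    by (intro prod.cong) (simp_all add: inner_sum_left inner_Basis if_distrib cong: if_cong)
  have meas: "(\<lambda>x::'a. \<Prod>b\<in>Basis. f b (x \<bullet> b)) \<in> borel_measurable borel"
    by measurable
  have "integrable (\<Pi>\<^sub>M b\<in>Basis. lborel) (\<lambda>g. \<Prod>b\<in>Basis. f b (g b))"
    by (intro product_integrable_prod int) auto
  then show "integrable (lborel::'a measure) (\<lambda>x. \<Prod>b\<in>Basis. f b (x \<bullet> b))"
    using meas by (subst lborel_eq, subst integrable_distr_eq) (auto simp: coord)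
  show "(\<integral>x. (\<Prod>b\<in>Basis. f b (x \<bullet> b)) \<partial>(lborel::'a measure)) = (\<Prod>b\<in>Basis. integral\<^sup>L lborel (f b))"
    using meas by (subst lborel_eq, subst integral_distr) (auto simp: coord intro!: product_integral_prod int)
qed

lemma (in pair_sigma_finite) integrable_product_mult:
  fixes f :: "'a \<Rightarrow> real" and g :: "'b \<Rightarrow> real"
  assumes f: "integrable M1 f" and g: "integrable M2 g"
  shows "integrable (M1 \<Otimes>\<^sub>M M2) (\<lambda>p. f (fst p) * g (snd p))"
    and "(\<integral>p. f (fst p) * g (snd p) \<partial>(M1 \<Otimes>\<^sub>M M2)) = integral\<^sup>L M1 f * integral\<^sup>L M2 g"
proof -
  have [measurable]: "f \<in> borel_measurable M1" "g \<in> borel_measurable M2"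
    using f g by auto
  show int: "integrable (M1 \<Otimes>\<^sub>M M2) (\<lambda>p. f (fst p) * g (snd p))"
  proof (rule integrableI_bounded)
    have "(\<integral>\<^sup>+ p. ennreal (norm (f (fst p) * g (snd p))) \<partial>(M1 \<Otimes>\<^sub>M M2))
        = (\<integral>\<^sup>+ x. \<integral>\<^sup>+ y. ennreal (norm (f x)) * ennreal (norm (g y)) \<partial>M2 \<partial>M1)"
      by (subst M2.nn_integral_fst[symmetric]) (auto simp: abs_mult ennreal_mult)
    also have "\<dots> = (\<integral>\<^sup>+ x. ennreal (norm (f x)) \<partial>M1) * (\<integral>\<^sup>+ y. ennreal (norm (g y)) \<partial>M2)"
      by (simp add: nn_integral_cmult nn_integral_multc)
    also have "\<dots> < \<infinity>"
      using f g unfolding integrable_iff_bounded by (simp add: ennreal_mult_less_top)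
    finally show "(\<integral>\<^sup>+ p. ennreal (norm (f (fst p) * g (snd p))) \<partial>(M1 \<Otimes>\<^sub>M M2)) < \<infinity>" .
  qed simp
  show "(\<integral>p. f (fst p) * g (snd p) \<partial>(M1 \<Otimes>\<^sub>M M2)) = integral\<^sup>L M1 f * integral\<^sup>L M2 g"
    using integral_fst'[OF int] by simp
qed

lemma measurable_lborel_fst [measurable]:
  "fst \<in> (lborel::('a::euclidean_space \<times> 'b::euclidean_space) measure) \<rightarrow>\<^sub>M (borel::'a measure)"
  using measurable_fst[of "lborel::'a measure" "lborel::'b measure"] by (simp add: lborel_prod)

lemma measurable_lborel_snd [measurable]:
  "snd \<in> (lborel::('a::euclidean_space \<times> 'b::euclidean_space) measure) \<rightarrow>\<^sub>M (borel::'b measure)"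
  using measurable_snd[of "lborel::'a measure" "lborel::'b measure"] by (simp add: lborel_prod)

lemma ennreal_abs_mult_weight_le:
  fixes a b w :: real
  assumes "0 \<le> w"
  shows "ennreal (\<bar>a * b\<bar> * w) \<le> ennreal (a\<^sup>2 / 2) * ennreal w + ennreal (b\<^sup>2 / 2) * ennreal w"
proof -
  have "\<bar>a * b\<bar> \<le> (a\<^sup>2 + b\<^sup>2) / 2"
    using sum_squares_bound[of "\<bar>a\<bar>" "\<bar>b\<bar>"] by (simp add: abs_mult)
  then have "\<bar>a * b\<bar> * w \<le> (a\<^sup>2 + b\<^sup>2) / 2 * w"
    using assms by (rule mult_right_mono)
  then have "\<bar>a * b\<bar> * w \<le> a\<^sup>2 / 2 * w + b\<^sup>2 / 2 * w"
    by (simp add: field_simps)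
  then show ?thesis
    using assms by (simp add: ennreal_mult[symmetric] ennreal_plus[symmetric] ennreal_leI del: ennreal_plus)
qed

lemma (in sigma_finite_measure) schur_test_nn_integral:
  fixes f :: "'a \<Rightarrow> real" and w :: "'a \<Rightarrow> 'a \<Rightarrow> real"
  assumes [measurable]: "f \<in> borel_measurable M"
    and w_measurable [measurable]: "case_prod w \<in> borel_measurable (M \<Otimes>\<^sub>M M)"
    and w_nonneg: "\<And>a b. 0 \<le> w a b"
    and row: "\<And>a. a \<in> space M \<Longrightarrow> (\<integral>\<^sup>+b. ennreal (w a b) \<partial>M) \<le> K"
    and column: "\<And>b. b \<in> space M \<Longrightarrow> (\<integral>\<^sup>+a. ennreal (w a b) \<partial>M) \<le> K"
  shows "(\<integral>\<^sup>+p. ennreal (\<bar>f (fst p) * f (snd p)\<bar> * w (fst p) (snd p)) \<partial>(M \<Otimes>\<^sub>M M))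
       \<le> K * (\<integral>\<^sup>+x. ennreal ((f x)\<^sup>2) \<partial>M)"
proof -
  have pair: "pair_sigma_finite M M"
    by (simp add: pair_sigma_finite_def sigma_finite_measure_axioms)
  define g where "g x = ennreal ((f x)\<^sup>2 / 2)" for x
  have [measurable]: "g \<in> borel_measurable M"
    unfolding g_def by measurable
  have "ennreal (\<bar>f a * f b\<bar> * w a b) \<le> g a * ennreal (w a b) + g b * ennreal (w a b)" for a b
    unfolding g_def by (rule ennreal_abs_mult_weight_le[OF w_nonneg])
  then have "(\<integral>\<^sup>+p. ennreal (\<bar>f (fst p) * f (snd p)\<bar> * w (fst p) (snd p)) \<partial>(M \<Otimes>\<^sub>M M))
      \<le> (\<integral>\<^sup>+p. g (fst p) * ennreal (w (fst p) (snd p)) + g (snd p) * ennreal (w (fst p) (snd p)) \<partial>(M \<Otimes>\<^sub>M M))"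
    by (intro nn_integral_mono)
  also have "\<dots> = (\<integral>\<^sup>+a. g a * (\<integral>\<^sup>+b. ennreal (w a b) \<partial>M) \<partial>M) + (\<integral>\<^sup>+b. g b * (\<integral>\<^sup>+a. ennreal (w a b) \<partial>M) \<partial>M)"
  proof -
    have row_measurable: "(\<lambda>b. ennreal (w a b)) \<in> borel_measurable M" if "a \<in> space M" for a
      using measurable_compose[OF measurable_Pair1'[OF that] w_measurable] by simp
    have column_measurable: "(\<lambda>a. ennreal (w a b)) \<in> borel_measurable M" if "b \<in> space M" for b
      using measurable_compose[OF measurable_Pair2'[OF that] w_measurable] by simp
    have "(\<integral>\<^sup>+p. g (fst p) * ennreal (w (fst p) (snd p)) \<partial>(M \<Otimes>\<^sub>M M)) = (\<integral>\<^sup>+a. \<integral>\<^sup>+b. g a * ennreal (w a b) \<partial>M \<partial>M)"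
      using nn_integral_fst[of "\<lambda>p. g (fst p) * ennreal (w (fst p) (snd p))" M] by simp
    also have "\<dots> = (\<integral>\<^sup>+a. g a * (\<integral>\<^sup>+b. ennreal (w a b) \<partial>M) \<partial>M)"
      by (intro nn_integral_cong nn_integral_cmult row_measurable)
    moreover have "(\<integral>\<^sup>+p. g (snd p) * ennreal (w (fst p) (snd p)) \<partial>(M \<Otimes>\<^sub>M M)) = (\<integral>\<^sup>+b. \<integral>\<^sup>+a. g b * ennreal (w a b) \<partial>M \<partial>M)"
      using pair_sigma_finite.nn_integral_snd[OF pair, where f="\<lambda>p. g (snd p) * ennreal (w (fst p) (snd p))"] by simp
    moreover have "\<dots> = (\<integral>\<^sup>+b. g b * (\<integral>\<^sup>+a. ennreal (w a b) \<partial>M) \<partial>M)"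
      by (intro nn_integral_cong nn_integral_cmult column_measurable)
    ultimately show ?thesis
      by (subst nn_integral_add) simp_all
  qed
  also have "\<dots> \<le> (\<integral>\<^sup>+a. g a * K \<partial>M) + (\<integral>\<^sup>+b. g b * K \<partial>M)"
    by (intro add_mono nn_integral_mono mult_left_mono row column) simp_all
  also have "\<dots> = (\<integral>\<^sup>+x. g x + g x \<partial>M) * K"
    by (simp add: nn_integral_add nn_integral_multc distrib_right)
  also have "\<dots> = K * (\<integral>\<^sup>+x. ennreal ((f x)\<^sup>2) \<partial>M)"
    by (simp add: g_def ennreal_plus[symmetric] mult.commute del: ennreal_plus)
  finally show ?thesis .
qed

section \<open>The Gaussian and its Fourier transform\<close>

lemma integral_gaussian_iexp:
  fixes \<sigma> z :: real
  assumes "\<sigma> > 0"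
  shows "(\<integral>y. complex_of_real (exp (- y\<^sup>2 / (2 * \<sigma>\<^sup>2))) * iexp (z * y) \<partial>lborel)
         = complex_of_real (\<sigma> * sqrt (2 * pi) * exp (- (\<sigma>\<^sup>2 * z\<^sup>2) / 2))"
proof -
  have "complex_of_real (exp (- (\<sigma> * z)\<^sup>2 / 2)) = char std_normal_distribution (\<sigma> * z)"
    by (simp add: char_std_normal_distribution)
  also have "\<dots> = (\<integral>u. std_normal_density u *\<^sub>R iexp (\<sigma> * z * u) \<partial>lborel)"
    unfolding char_def by (subst integral_density) auto
  also have "\<dots> = \<bar>1/\<sigma>\<bar> *\<^sub>R (\<integral>y. std_normal_density (0 + 1/\<sigma> * y) *\<^sub>R iexp (\<sigma> * z * (0 + 1/\<sigma> * y)) \<partial>lborel)"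
    by (rule lborel_integral_real_affine) (use assms in auto)
  also have "\<dots> = (1/\<sigma>) *\<^sub>R (1 / sqrt (2*pi)) *\<^sub>R (\<integral>y. complex_of_real (exp (- y\<^sup>2 / (2 * \<sigma>\<^sup>2))) * iexp (z * y) \<partial>lborel)"
    using assms by (simp add: std_normal_density_def power_divide field_simps scaleR_conv_of_real)
  finally show ?thesis
    using assms by (simp add: scaleR_conv_of_real field_simps power_mult_distrib)
qed

definition gaussian :: "real \<Rightarrow> 'a::euclidean_space \<Rightarrow> real" where
  "gaussian \<sigma> x = exp (- (norm x)\<^sup>2 / (2 * \<sigma>\<^sup>2))"

definition gaussian_ft :: "real \<Rightarrow> 'a::euclidean_space \<Rightarrow> real" where
  "gaussian_ft \<sigma> z = (\<Prod>b\<in>Basis. \<sigma> * sqrt (2 * pi) * exp (- (\<sigma>\<^sup>2 * (z \<bullet> b)\<^sup>2) / 2))"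

lemma gaussian_nonneg: "0 \<le> gaussian \<sigma> x"
  by (simp add: gaussian_def)

lemma gaussian_measurable [measurable]: "gaussian \<sigma> \<in> borel_measurable borel"
  unfolding gaussian_def by measurable

lemma gaussian_mono: "0 < s \<Longrightarrow> s \<le> t \<Longrightarrow> gaussian s x \<le> gaussian t x"
  unfolding gaussian_def by (auto intro!: divide_left_mono power_mono)

lemma gaussian_ft_nonneg: "\<sigma> > 0 \<Longrightarrow> 0 \<le> gaussian_ft \<sigma> z"
  unfolding gaussian_ft_def by (intro prod_nonneg) auto

lemma gaussian_ft_uminus: "gaussian_ft \<sigma> (- z) = gaussian_ft \<sigma> z"
  by (simp add: gaussian_ft_def)

lemma gaussian_ft_measurable [measurable]: "gaussian_ft \<sigma> \<in> borel_measurable borel"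
  unfolding gaussian_ft_def by measurable

lemma gaussian_iexp_eq_prod:
  "complex_of_real (gaussian \<sigma> x) * iexp (z \<bullet> x) =
     (\<Prod>b\<in>Basis. complex_of_real (exp (- (x \<bullet> b)\<^sup>2 / (2 * \<sigma>\<^sup>2))) * iexp ((z \<bullet> b) * (x \<bullet> b)))"
proof -
  have "(norm x)\<^sup>2 = (\<Sum>b\<in>Basis. (x \<bullet> b)\<^sup>2)"
    unfolding power2_norm_eq_inner by (subst euclidean_inner) (simp add: power2_eq_square)
  then have "complex_of_real (gaussian \<sigma> x) = (\<Prod>b\<in>Basis. complex_of_real (exp (- (x \<bullet> b)\<^sup>2 / (2 * \<sigma>\<^sup>2))))"
    unfolding gaussian_def by (simp add: sum_divide_distrib sum_negf[symmetric] exp_sum del: sum_negf)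
  moreover have "iexp (z \<bullet> x) = (\<Prod>b\<in>Basis. iexp ((z \<bullet> b) * (x \<bullet> b)))"
    by (simp add: euclidean_inner[of z x] exp_sum[symmetric] sum_distrib_left)
  ultimately show ?thesis
    by (simp add: prod.distrib)
qed

lemma gaussian_fourier_transform:
  fixes z :: "'a::euclidean_space"
  assumes "\<sigma> > 0"
  shows integrable_gaussian_cos: "integrable lborel (\<lambda>x::'a. gaussian \<sigma> x * cos (z \<bullet> x))"
    and integral_gaussian_cos: "(\<integral>x. gaussian \<sigma> x * cos (z \<bullet> x) \<partial>lborel) = gaussian_ft \<sigma> z"
proof -
  define f where "f b y = complex_of_real (exp (- y\<^sup>2 / (2 * \<sigma>\<^sup>2))) * iexp ((z \<bullet> b) * y)"
    for b :: 'a and y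
  have f_integral: "integral\<^sup>L lborel (f b) = complex_of_real (\<sigma> * sqrt (2 * pi) * exp (- (\<sigma>\<^sup>2 * (z \<bullet> b)\<^sup>2) / 2))" for b
    unfolding f_def by (rule integral_gaussian_iexp[OF assms])
  have "integrable lborel (f b)" for b
    using f_integral[of b] assms not_integrable_integral_eq by fastforce
  note prod_Basis = integral_lborel_prod_Basis[of f, OF this]
  have complex_integrable: "integrable lborel (\<lambda>x::'a. complex_of_real (gaussian \<sigma> x) * iexp (z \<bullet> x))"
    using prod_Basis(1) by (simp add: gaussian_iexp_eq_prod f_def)
  from integrable_Re[OF this] show "integrable lborel (\<lambda>x::'a. gaussian \<sigma> x * cos (z \<bullet> x))"
    by (simp add: Re_exp)
  have "(\<integral>x. complex_of_real (gaussian \<sigma> x) * iexp (z \<bullet> x) \<partial>lborel) = (\<integral>x. (\<Prod>b\<in>Basis. f b (x \<bullet> b)) \<partial>lborel)"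
    by (simp add: gaussian_iexp_eq_prod f_def)
  also have "\<dots> = complex_of_real (gaussian_ft \<sigma> z)"
    by (simp add: prod_Basis(2) f_integral gaussian_ft_def)
  finally have "(\<integral>x. complex_of_real (gaussian \<sigma> x) * iexp (z \<bullet> x) \<partial>lborel) = complex_of_real (gaussian_ft \<sigma> z)" .
  from arg_cong[OF this, of Re] show "(\<integral>x. gaussian \<sigma> x * cos (z \<bullet> x) \<partial>lborel) = gaussian_ft \<sigma> z"
    using integral_Re[OF complex_integrable]
    by (simp add: Re_exp)
qed

lemma nn_integral_gaussian_ft:
  assumes "\<sigma> > 0"
  shows "(\<integral>\<^sup>+z. ennreal (gaussian_ft \<sigma> (z::'a::euclidean_space)) \<partial>lborel) = (2 * pi) ^ DIM('a)"
proof -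
  have normal: "\<sigma> * sqrt (2 * pi) * exp (- (\<sigma>\<^sup>2 * y\<^sup>2) / 2) = 2 * pi * normal_density 0 (1/\<sigma>) y" for y
  proof -
    have sd: "sqrt (2 * pi * (1 / \<sigma>)\<^sup>2) = sqrt (2 * pi) / \<sigma>"
      using assms by (simp add: real_sqrt_mult power_divide real_sqrt_divide)
    have sq: "2 * pi = sqrt (2 * pi) * sqrt (2 * pi)"
      by simp
    show ?thesis
      unfolding normal_density_def sd using assms by (subst (2) sq) (simp add: field_simps power_divide)
  qed
  have "(\<integral>\<^sup>+y. ennreal (normal_density 0 (1/\<sigma>) y) \<partial>lborel) = 1"
    using assms by (subst nn_integral_eq_integral) auto
  then have normal_line: "(\<integral>\<^sup>+y. ennreal (\<sigma> * sqrt (2 * pi) * exp (- (\<sigma>\<^sup>2 * y\<^sup>2) / 2)) \<partial>lborel) = 2 * pi"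
    unfolding normal
    by (simp add: ennreal_mult nn_integral_cmult)
  have "(\<integral>\<^sup>+z. ennreal (gaussian_ft \<sigma> (z::'a)) \<partial>lborel)
      = (\<integral>\<^sup>+z. (\<Prod>b\<in>Basis. (\<lambda>b y. ennreal (\<sigma> * sqrt (2 * pi) * exp (- (\<sigma>\<^sup>2 * y\<^sup>2) / 2))) b (z \<bullet> b)) \<partial>(lborel::'a measure))"
    unfolding gaussian_ft_def using assms by (simp add: prod_ennreal)
  also have "\<dots> = (\<Prod>b\<in>(Basis::'a set). \<integral>\<^sup>+y. ennreal (\<sigma> * sqrt (2 * pi) * exp (- (\<sigma>\<^sup>2 * y\<^sup>2) / 2)) \<partial>lborel)"
    by (rule nn_integral_lborel_prod) auto
  finally show ?thesis
    using normal_line by (simp add: ennreal_power)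
qed

lemma nn_integral_gaussian_ft_translate:
  assumes "\<sigma> > 0"
  shows "(\<integral>\<^sup>+y. ennreal (gaussian_ft \<sigma> (c + y :: 'a::euclidean_space)) \<partial>lborel) = (2 * pi) ^ DIM('a)"
proof -
  have "(\<integral>\<^sup>+y. ennreal (gaussian_ft \<sigma> (c + y :: 'a)) \<partial>lborel)
      = (\<integral>\<^sup>+y. ennreal (gaussian_ft \<sigma> y) \<partial>distr lborel borel ((+) c))"
    by (subst nn_integral_distr) auto
  then show ?thesis
    by (simp add: lborel_distr_plus nn_integral_gaussian_ft[OF assms])
qed

lemma nn_integral_gaussian_ft_symmetrized:
  fixes a b :: "'a::euclidean_space"
  assumes "\<sigma> > 0"
  shows "(\<integral>\<^sup>+y. ennreal ((gaussian_ft \<sigma> (a - y) + gaussian_ft \<sigma> (a + y)) / 2) \<partial>lborel) = (2 * pi) ^ DIM('a)"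
    and "(\<integral>\<^sup>+x. ennreal ((gaussian_ft \<sigma> (x - b) + gaussian_ft \<sigma> (x + b)) / 2) \<partial>lborel) = (2 * pi) ^ DIM('a)"
proof -
  have split: "ennreal ((gaussian_ft \<sigma> u + gaussian_ft \<sigma> v) / 2) = (ennreal (gaussian_ft \<sigma> u) + ennreal (gaussian_ft \<sigma> v)) / 2"
    for u v :: 'a
    using assms by (simp add: gaussian_ft_nonneg ennreal_plus[symmetric] ennreal_divide_numeral del: ennreal_plus)
  have halve: "(x + x) / 2 = x" for x :: ennreal
    by (simp add: mult_2_right[symmetric] mult_divide_eq_ennreal)
  have "gaussian_ft \<sigma> (a - y) = gaussian_ft \<sigma> (- a + y)" for y
    using gaussian_ft_uminus[of \<sigma> "a - y"] by simp
  then have "(\<integral>\<^sup>+y. ennreal ((gaussian_ft \<sigma> (a - y) + gaussian_ft \<sigma> (a + y)) / 2) \<partial>lborel)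
      = ((\<integral>\<^sup>+y. ennreal (gaussian_ft \<sigma> (- a + y)) \<partial>lborel) + (\<integral>\<^sup>+y. ennreal (gaussian_ft \<sigma> (a + y)) \<partial>lborel)) / 2"
    unfolding split by (simp add: nn_integral_add nn_integral_divide)
  then show "(\<integral>\<^sup>+y. ennreal ((gaussian_ft \<sigma> (a - y) + gaussian_ft \<sigma> (a + y)) / 2) \<partial>lborel) = (2 * pi) ^ DIM('a)"
    by (simp only: nn_integral_gaussian_ft_translate[OF assms] halve)
  have "(\<integral>\<^sup>+x. ennreal ((gaussian_ft \<sigma> (x - b) + gaussian_ft \<sigma> (x + b)) / 2) \<partial>lborel)
      = ((\<integral>\<^sup>+x. ennreal (gaussian_ft \<sigma> (- b + x)) \<partial>lborel) + (\<integral>\<^sup>+x. ennreal (gaussian_ft \<sigma> (b + x)) \<partial>lborel)) / 2"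
    unfolding split diff_conv_add_uminus add.commute[of _ b] add.commute[of _ "- b"]
    by (simp add: nn_integral_add nn_integral_divide)
  then show "(\<integral>\<^sup>+x. ennreal ((gaussian_ft \<sigma> (x - b) + gaussian_ft \<sigma> (x + b)) / 2) \<partial>lborel) = (2 * pi) ^ DIM('a)"
    by (simp only: nn_integral_gaussian_ft_translate[OF assms] halve)
qed

section \<open>The Plancherel inequality for cosine transforms\<close>

lemma integrable_mult_cos:
  fixes f :: "'a::euclidean_space \<Rightarrow> real"
  assumes "integrable lborel f"
  shows "integrable lborel (\<lambda>\<xi>. f \<xi> * cos (\<xi> \<bullet> x))"
proof -
  have [measurable]: "f \<in> borel_measurable borel"
    using assms by simp
  show ?thesis
    using assms by (rule Bochner_Integration.integrable_bound[OF integrable_norm])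
      (auto simp: abs_mult intro!: mult_left_le)
qed

lemma abs_integral_mult_cos_le:
  fixes f :: "'a::euclidean_space \<Rightarrow> real"
  assumes "integrable lborel f"
  shows "\<bar>\<integral>\<xi>. f \<xi> * cos (\<xi> \<bullet> x) \<partial>lborel\<bar> \<le> (\<integral>\<xi>. \<bar>f \<xi>\<bar> \<partial>lborel)"
proof -
  have "\<bar>\<integral>\<xi>. f \<xi> * cos (\<xi> \<bullet> x) \<partial>lborel\<bar> \<le> (\<integral>\<xi>. \<bar>f \<xi> * cos (\<xi> \<bullet> x)\<bar> \<partial>lborel)"
    by (rule integral_abs_bound)
  also have "\<dots> \<le> (\<integral>\<xi>. \<bar>f \<xi>\<bar> \<partial>lborel)"
    using integrable_abs[OF integrable_mult_cos[OF assms]] integrable_abs[OF assms]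
    by (intro integral_mono) (auto simp: abs_mult intro!: mult_left_le)
  finally show ?thesis .
qed

lemma integrable_gaussian_cos_product:
  fixes f :: "'a::euclidean_space \<Rightarrow> real"
  assumes f: "integrable lborel f" and "\<sigma> > 0"
  shows "integrable ((lborel::'a measure) \<Otimes>\<^sub>M (lborel::('a \<times> 'a) measure))
           (\<lambda>(x, p). gaussian \<sigma> x * (f (fst p) * cos (fst p \<bullet> x)) * (f (snd p) * cos (snd p \<bullet> x)))"
    (is "integrable _ ?H")
proof (rule Bochner_Integration.integrable_bound)
  have [measurable]: "f \<in> borel_measurable borel"
    using f by simp
  have "integrable (lborel::'a measure) (gaussian \<sigma>)"
    using integrable_gaussian_cos[OF \<open>\<sigma> > 0\<close>, of 0] by simp
  moreover have "integrable (lborel::('a \<times> 'a) measure) (\<lambda>p. \<bar>f (fst p)\<bar> * \<bar>f (snd p)\<bar>)"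
    using lborel_pair.integrable_product_mult(1)[of "\<lambda>x. \<bar>f x\<bar>" "\<lambda>x. \<bar>f x\<bar>"] f
    by (simp add: lborel_prod)
  ultimately show "integrable (lborel \<Otimes>\<^sub>M lborel)
      (\<lambda>q::'a \<times> ('a \<times> 'a). gaussian \<sigma> (fst q) * (\<bar>f (fst (snd q))\<bar> * \<bar>f (snd (snd q))\<bar>))"
    by (rule lborel_pair.integrable_product_mult(1))
  show "?H \<in> borel_measurable (lborel \<Otimes>\<^sub>M lborel)"
    by measurable
  show "AE q in lborel \<Otimes>\<^sub>M lborel. norm (?H q) \<le>
      norm (gaussian \<sigma> (fst q) * (\<bar>f (fst (snd q))\<bar> * \<bar>f (snd (snd q))\<bar>))"
  proof (intro AE_I2)
    fix q :: "'a \<times> 'a \<times> 'a"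
    obtain x a b where q: "q = (x, a, b)"
      by (cases q) auto
    have "norm (?H q) = gaussian \<sigma> x * ((\<bar>f a\<bar> * \<bar>cos (a \<bullet> x)\<bar>) * (\<bar>f b\<bar> * \<bar>cos (b \<bullet> x)\<bar>))"
      by (simp add: q abs_mult gaussian_nonneg)
    also have "\<dots> \<le> gaussian \<sigma> x * (\<bar>f a\<bar> * \<bar>f b\<bar>)"
      by (intro mult_left_mono mult_mono mult_right_le_one_le) (auto simp: gaussian_nonneg)
    finally show "norm (?H q) \<le> norm (gaussian \<sigma> (fst q) * (\<bar>f (fst (snd q))\<bar> * \<bar>f (snd (snd q))\<bar>))"
      by (simp add: q gaussian_nonneg)
  qed
qed

lemma integral_gaussian_cos_product:
  fixes a b :: "'a::euclidean_space"
  assumes "\<sigma> > 0"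
  shows "(\<integral>x. gaussian \<sigma> x * (f a * cos (a \<bullet> x)) * (f b * cos (b \<bullet> x)) \<partial>lborel)
       = f a * f b * (gaussian_ft \<sigma> (a - b) + gaussian_ft \<sigma> (a + b)) / 2"
proof -
  have expand: "gaussian \<sigma> x * (f a * cos (a \<bullet> x)) * (f b * cos (b \<bullet> x))
      = f a * f b / 2 * (gaussian \<sigma> x * cos ((a - b) \<bullet> x) + gaussian \<sigma> x * cos ((a + b) \<bullet> x))" for x
    by (simp add: cos_times_cos inner_diff_left inner_add_left algebra_simps)
  then have "(\<integral>x. gaussian \<sigma> x * (f a * cos (a \<bullet> x)) * (f b * cos (b \<bullet> x)) \<partial>lborel)
      = f a * f b / 2 * ((\<integral>x. gaussian \<sigma> x * cos ((a - b) \<bullet> x) \<partial>lborel) + (\<integral>x. gaussian \<sigma> x * cos ((a + b) \<bullet> x) \<partial>lborel))"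
    using assms by (simp only: expand integral_mult_right_zero Bochner_Integration.integral_add integrable_gaussian_cos)
  then show ?thesis
    using assms by (simp add: integral_gaussian_cos)
qed

lemma gaussian_weighted_cos_transform_square:
  fixes f :: "'a::euclidean_space \<Rightarrow> real"
  assumes f: "integrable lborel f" and "\<sigma> > 0"
  shows "integrable (lborel::('a \<times> 'a) measure)
           (\<lambda>p. f (fst p) * f (snd p) * (gaussian_ft \<sigma> (fst p - snd p) + gaussian_ft \<sigma> (fst p + snd p)) / 2)"
    and "(\<integral>x. gaussian \<sigma> x * (\<integral>\<xi>. f \<xi> * cos (\<xi> \<bullet> x) \<partial>lborel)\<^sup>2 \<partial>lborel)
       = (\<integral>p. f (fst p) * f (snd p) * (gaussian_ft \<sigma> (fst p - snd p) + gaussian_ft \<sigma> (fst p + snd p)) / 2 \<partial>lborel)"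
proof -
  define H where "H x p = gaussian \<sigma> x * (f (fst p) * cos (fst p \<bullet> x)) * (f (snd p) * cos (snd p \<bullet> x))"
    for x :: 'a and p :: "'a \<times> 'a"
  have H_integrable: "integrable (lborel \<Otimes>\<^sub>M lborel) (case_prod H)"
    unfolding H_def using integrable_gaussian_cos_product[OF assms] by (simp add: split_beta')
  have "(\<integral>\<xi>. f \<xi> * cos (\<xi> \<bullet> x) \<partial>lborel)\<^sup>2
      = (\<integral>p. (f (fst p) * cos (fst p \<bullet> x)) * (f (snd p) * cos (snd p \<bullet> x)) \<partial>(lborel \<Otimes>\<^sub>M lborel))" for x
    unfolding power2_eq_square
    by (rule lborel_pair.integrable_product_mult(2)[symmetric]; rule integrable_mult_cos[OF f])
  then have inner: "gaussian \<sigma> x * (\<integral>\<xi>. f \<xi> * cos (\<xi> \<bullet> x) \<partial>lborel)\<^sup>2 = (\<integral>p. H x p \<partial>lborel)" for x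
    unfolding H_def by (simp add: lborel_prod mult.assoc)
  have outer: "(\<integral>x. H x p \<partial>lborel)
      = f (fst p) * f (snd p) * (gaussian_ft \<sigma> (fst p - snd p) + gaussian_ft \<sigma> (fst p + snd p)) / 2" for p
    unfolding H_def by (rule integral_gaussian_cos_product[OF \<open>\<sigma> > 0\<close>])
  show "integrable (lborel::('a \<times> 'a) measure)
      (\<lambda>p. f (fst p) * f (snd p) * (gaussian_ft \<sigma> (fst p - snd p) + gaussian_ft \<sigma> (fst p + snd p)) / 2)"
    using lborel_pair.integrable_snd[OF H_integrable] by (simp add: outer)
  show "(\<integral>x. gaussian \<sigma> x * (\<integral>\<xi>. f \<xi> * cos (\<xi> \<bullet> x) \<partial>lborel)\<^sup>2 \<partial>lborel)
      = (\<integral>p. f (fst p) * f (snd p) * (gaussian_ft \<sigma> (fst p - snd p) + gaussian_ft \<sigma> (fst p + snd p)) / 2 \<partial>lborel)"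
    using lborel_pair.Fubini_integral[OF H_integrable] by (simp add: inner outer)
qed

lemma nn_integral_gaussian_ft_pair_le:
  fixes f :: "'a::euclidean_space \<Rightarrow> real"
  assumes [measurable]: "f \<in> borel_measurable borel" and "\<sigma> > 0"
  shows "(\<integral>\<^sup>+p. ennreal (\<bar>f (fst p) * f (snd p)\<bar> * ((gaussian_ft \<sigma> (fst p - snd p) + gaussian_ft \<sigma> (fst p + snd p)) / 2))
           \<partial>(lborel::('a \<times> 'a) measure))
       \<le> (2 * pi) ^ DIM('a) * (\<integral>\<^sup>+x. ennreal ((f x)\<^sup>2) \<partial>lborel)"
  unfolding lborel_prod[symmetric] using \<open>\<sigma> > 0\<close>
  by (intro lborel.schur_test_nn_integral)
    (simp_all add: gaussian_ft_nonneg nn_integral_gaussian_ft_symmetrized)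

lemma gaussian_weighted_plancherel_le:
  fixes f :: "'a::euclidean_space \<Rightarrow> real"
  assumes f: "integrable lborel f" and "\<sigma> > 0"
  shows "(\<integral>\<^sup>+x. ennreal (gaussian \<sigma> x * (\<integral>\<xi>. f \<xi> * cos (\<xi> \<bullet> x) \<partial>lborel)\<^sup>2) \<partial>lborel)
       \<le> (2 * pi) ^ DIM('a) * (\<integral>\<^sup>+\<xi>. ennreal ((f \<xi>)\<^sup>2) \<partial>lborel)"
proof -
  define F where "F x = (\<integral>\<xi>. f \<xi> * cos (\<xi> \<bullet> x) \<partial>lborel)" for x :: 'a
  define J where "J p = f (fst p) * f (snd p) * (gaussian_ft \<sigma> (fst p - snd p) + gaussian_ft \<sigma> (fst p + snd p)) / 2"
    for p :: "'a \<times> 'a"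
  have [measurable]: "f \<in> borel_measurable borel"
    using f by simp
  have [measurable]: "F \<in> borel_measurable borel"
    unfolding F_def by measurable
  have "integrable lborel (\<lambda>x. gaussian \<sigma> x * F x ^ 2)"
  proof (rule Bochner_Integration.integrable_bound)
    show "integrable lborel (\<lambda>x::'a. gaussian \<sigma> x * (\<integral>\<xi>. \<bar>f \<xi>\<bar> \<partial>lborel)\<^sup>2)"
      using integrable_gaussian_cos[OF \<open>\<sigma> > 0\<close>, of "0::'a"] by simp
    show "(\<lambda>x. gaussian \<sigma> x * F x ^ 2) \<in> borel_measurable lborel"
      by measurable
    have "F x ^ 2 \<le> (\<integral>\<xi>. \<bar>f \<xi>\<bar> \<partial>lborel)\<^sup>2" for x
      unfolding F_def using abs_integral_mult_cos_le[OF f] by (metis abs_ge_zero power2_abs power_mono)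
    then show "AE x in lborel. norm (gaussian \<sigma> x * F x ^ 2) \<le> norm (gaussian \<sigma> x * (\<integral>\<xi>. \<bar>f \<xi>\<bar> \<partial>lborel)\<^sup>2)"
      by (intro AE_I2) (simp add: gaussian_nonneg mult_left_mono)
  qed
  then have "(\<integral>\<^sup>+x. ennreal (gaussian \<sigma> x * F x ^ 2) \<partial>lborel) = ennreal (\<integral>x. gaussian \<sigma> x * F x ^ 2 \<partial>lborel)"
    by (rule nn_integral_eq_integral) (simp add: gaussian_nonneg)
  also have "\<dots> = ennreal (\<integral>p. J p \<partial>lborel)"
    unfolding F_def J_def by (simp add: gaussian_weighted_cos_transform_square(2)[OF assms])
  also have "\<dots> \<le> ennreal (norm (\<integral>p. J p \<partial>lborel))"
    by (intro ennreal_leI) simp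
  also have "\<dots> \<le> (\<integral>\<^sup>+p. ennreal (norm (J p)) \<partial>lborel)"
    unfolding J_def by (rule integral_norm_bound_ennreal[OF gaussian_weighted_cos_transform_square(1)[OF assms]])
  also have "\<dots> = (\<integral>\<^sup>+p. ennreal (\<bar>f (fst p) * f (snd p)\<bar> * ((gaussian_ft \<sigma> (fst p - snd p) + gaussian_ft \<sigma> (fst p + snd p)) / 2)) \<partial>lborel)"
    unfolding J_def using \<open>\<sigma> > 0\<close> by (simp add: abs_mult gaussian_ft_nonneg)
  also have "\<dots> \<le> (2 * pi) ^ DIM('a) * (\<integral>\<^sup>+\<xi>. ennreal ((f \<xi>)\<^sup>2) \<partial>lborel)"
    by (rule nn_integral_gaussian_ft_pair_le) (use \<open>\<sigma> > 0\<close> in auto)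
  finally show ?thesis
    unfolding F_def .
qed

lemma plancherel_cos_le:
  fixes f :: "'a::euclidean_space \<Rightarrow> real"
  assumes f: "integrable lborel f"
  shows "(\<integral>\<^sup>+x. ennreal ((\<integral>\<xi>. f \<xi> * cos (\<xi> \<bullet> x) \<partial>lborel)\<^sup>2) \<partial>lborel)
       \<le> (2 * pi) ^ DIM('a) * (\<integral>\<^sup>+\<xi>. ennreal ((f \<xi>)\<^sup>2) \<partial>lborel)"
proof -
  define F where "F x = (\<integral>\<xi>. f \<xi> * cos (\<xi> \<bullet> x) \<partial>lborel)" for x :: 'a
  define u where "u n x = ennreal (gaussian (real (Suc n)) x * (F x)\<^sup>2)" for n x
  have [measurable]: "f \<in> borel_measurable borel"
    using f by simp
  have [measurable]: "F \<in> borel_measurable borel"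
    unfolding F_def by measurable
  have u_incseq: "incseq u"
    unfolding incseq_def le_fun_def u_def
    by (auto intro!: ennreal_leI mult_right_mono gaussian_mono)
  have "(\<lambda>n. gaussian (real (Suc n)) x * (F x)\<^sup>2) \<longlonglongrightarrow> exp 0 * (F x)\<^sup>2" for x
    unfolding gaussian_def by (intro tendsto_intros) real_asymp
  then have "(\<lambda>n. u n x) \<longlonglongrightarrow> ennreal ((F x)\<^sup>2)" for x
    unfolding u_def by (intro tendsto_ennrealI) simp
  then have "(SUP n. u n x) = ennreal ((F x)\<^sup>2)" for x
    using LIMSEQ_SUP[of "\<lambda>n. u n x"] u_incseq by (auto simp: incseq_def le_fun_def intro: LIMSEQ_unique)
  then have "(\<integral>\<^sup>+x. ennreal ((F x)\<^sup>2) \<partial>lborel) = (SUP n. \<integral>\<^sup>+x. u n x \<partial>lborel)"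
    using nn_integral_monotone_convergence_SUP[OF u_incseq] unfolding u_def by simp
  also have "\<dots> \<le> (2 * pi) ^ DIM('a) * (\<integral>\<^sup>+\<xi>. ennreal ((f \<xi>)\<^sup>2) \<partial>lborel)"
    unfolding u_def F_def by (intro SUP_least gaussian_weighted_plancherel_le[OF f]) simp
  finally show ?thesis
    unfolding F_def .
qed

section \<open>Integrability of the inverse quartic in dimension at most three\<close>

definition tail_weight :: "real \<Rightarrow> real \<Rightarrow> real" where
  "tail_weight p y = (if \<bar>y\<bar> \<le> 1 then 1 else \<bar>y\<bar> powr (- p))"

lemma tail_weight_nonneg: "0 \<le> tail_weight p y"
  by (simp add: tail_weight_def)

lemma tail_weight_measurable [measurable]: "tail_weight p \<in> borel_measurable borel"
  unfolding tail_weight_def by measurable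

lemma tail_weight_lower_bound:
  assumes "p > 0" "1 \<le> M" "\<bar>y\<bar> \<le> M"
  shows "M powr (- p) \<le> tail_weight p y"
proof (cases "\<bar>y\<bar> \<le> 1")
  case True
  then show ?thesis
    using assms powr_mono[of "- p" 0 M] by (simp add: tail_weight_def)
next
  case False
  then show ?thesis
    using assms by (auto simp: tail_weight_def intro!: powr_mono2')
qed

lemma nn_integral_tail_weight_finite:
  assumes "p > 1"
  shows "(\<integral>\<^sup>+ y. ennreal (tail_weight p y) \<partial>lborel) < \<infinity>"
proof -
  define g where "g y = indicator {1..} y * y powr (- p)" for y :: real
  have [measurable]: "g \<in> borel_measurable borel"
    unfolding g_def by measurable
  have g_nonneg: "0 \<le> g y" for y
    by (simp add: g_def indicator_def)
  have "- (1 powr (- p + 1)) / (- p + 1) = 1 / (p - 1)"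
    using assms by (simp add: field_simps)
  then have "((\<lambda>y. y powr (- p)) has_integral 1 / (p - 1)) {1..}"
    using has_integral_powr_to_inf[of "- p" 1] assms by simp
  then have g_integral: "(\<integral>\<^sup>+ y. ennreal (g y) \<partial>lborel) = ennreal (1 / (p - 1))"
    unfolding g_def using assms by (subst nn_integral_has_integral_lebesgue) auto
  have g_reflect: "(\<integral>\<^sup>+ y. ennreal (g (- y)) \<partial>lborel) = (\<integral>\<^sup>+ y. ennreal (g y) \<partial>lborel)"
    using nn_integral_real_affine[of "\<lambda>y. ennreal (g y)" "-1" 0] by simp
  have "tail_weight p y \<le> indicator {-1..1} y + g y + g (- y)" for y
    unfolding tail_weight_def g_def by (auto simp: indicator_def abs_if)
  then have "ennreal (tail_weight p y) \<le> indicator {-1..1} y + ennreal (g y) + ennreal (g (- y))" for y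
    using g_nonneg[of y] g_nonneg[of "- y"]
    by (simp add: ennreal_plus[symmetric] ennreal_indicator[symmetric] del: ennreal_plus)
  then have "(\<integral>\<^sup>+ y. ennreal (tail_weight p y) \<partial>lborel)
      \<le> (\<integral>\<^sup>+ y. indicator {-1..1} y + ennreal (g y) + ennreal (g (- y)) \<partial>lborel)"
    by (rule nn_integral_mono)
  also have "\<dots> = emeasure lborel {-1..1::real} + (\<integral>\<^sup>+ y. ennreal (g y) \<partial>lborel) + (\<integral>\<^sup>+ y. ennreal (g (- y)) \<partial>lborel)"
    by (simp add: nn_integral_add)
  also have "\<dots> < \<infinity>"
    by (simp add: g_reflect g_integral)
  finally show ?thesis .
qed

lemma inverse_quartic_le_prod_tail_weight:
  fixes \<xi> :: "'a::euclidean_space"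
  shows "1 / (1 + (norm \<xi>)^4) \<le> (\<Prod>b\<in>Basis. 2 * tail_weight (4 / DIM('a)) (\<xi> \<bullet> b))"
proof -
  define M where "M = max 1 (norm \<xi>)"
  have "1 \<le> M"
    by (simp add: M_def)
  have "1 / (1 + (norm \<xi>)^4) \<le> 1 / M ^ 4"
  proof (cases "norm \<xi> \<le> 1")
    case True
    then show ?thesis
      by (simp add: M_def divide_le_eq_1 add_pos_nonneg)
  next
    case False
    then show ?thesis
      by (intro divide_left_mono) (auto simp: M_def intro!: mult_pos_pos add_pos_nonneg)
  qed
  also have "\<dots> \<le> 2 ^ DIM('a) * M powr (- 4)"
    using \<open>1 \<le> M\<close> by (simp add: powr_minus powr_realpow divide_inverse)
  also have "\<dots> = (\<Prod>b\<in>(Basis::'a set). 2 * M powr (- (4 / DIM('a))))"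
    using \<open>1 \<le> M\<close> by (simp add: power_mult_distrib powr_power)
  also have "\<dots> \<le> (\<Prod>b\<in>Basis. 2 * tail_weight (4 / DIM('a)) (\<xi> \<bullet> b))"
  proof (intro prod_mono conjI)
    fix b :: 'a
    assume "b \<in> Basis"
    then have "\<bar>\<xi> \<bullet> b\<bar> \<le> M"
      using Basis_le_norm[of b \<xi>] by (simp add: M_def)
    then show "2 * M powr (- (4 / DIM('a))) \<le> 2 * tail_weight (4 / DIM('a)) (\<xi> \<bullet> b)"
      using tail_weight_lower_bound[of "4 / DIM('a)" M] \<open>1 \<le> M\<close> by simp
  qed simp
  finally show ?thesis .
qed

lemma nn_integral_inverse_quartic_finite:
  assumes "DIM('a::euclidean_space) \<le> 3"
  shows "(\<integral>\<^sup>+ \<xi>. ennreal (1 / (1 + (norm (\<xi>::'a))^4)) \<partial>lborel) < \<infinity>"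
proof -
  let ?w = "\<lambda>(b::'a) y. ennreal (2 * tail_weight (4 / DIM('a)) y)"
  have "(\<integral>\<^sup>+ \<xi>. ennreal (1 / (1 + (norm (\<xi>::'a))^4)) \<partial>lborel) \<le> (\<integral>\<^sup>+ \<xi>. (\<Prod>b\<in>Basis. ?w b (\<xi> \<bullet> b)) \<partial>lborel)"
    by (intro nn_integral_mono)
      (simp add: prod_ennreal tail_weight_nonneg ennreal_leI[OF inverse_quartic_le_prod_tail_weight])
  also have "\<dots> = (\<Prod>b\<in>Basis. \<integral>\<^sup>+ y. ?w b y \<partial>lborel)"
    by (rule nn_integral_lborel_prod) auto
  also have "\<dots> < \<infinity>"
  proof -
    have "4 / DIM('a) > 1"
      using assms by simp
    then have "(\<integral>\<^sup>+ y. ?w b y \<partial>lborel) < \<infinity>" for b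
      using nn_integral_tail_weight_finite[of "4 / DIM('a)"]
      by (simp add: ennreal_mult nn_integral_cmult tail_weight_nonneg ennreal_mult_less_top)
    then show ?thesis
      by (simp add: power_less_top_ennreal)
  qed
  finally show ?thesis .
qed

lemma nn_integral_inverse_quartic_scale:
  assumes "a > 0"
  shows "(\<integral>\<^sup>+ \<xi>. ennreal (1 / (1 + a * (norm (\<xi>::'a::euclidean_space))^4)) \<partial>lborel)
       = ennreal (a powr (- DIM('a) / 4)) * (\<integral>\<^sup>+ \<xi>. ennreal (1 / (1 + (norm (\<xi>::'a))^4)) \<partial>lborel)"
proof -
  define c where "c = a powr (- 1 / 4)"
  have "c > 0"
    using assms by (simp add: c_def)
  have c4: "a * c ^ 4 = 1"
    unfolding c_def using assms by (simp add: powr_power powr_add[symmetric] powr_minus field_simps)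
  have "(\<integral>\<^sup>+ \<xi>. ennreal (1 / (1 + a * (norm \<xi>)^4)) \<partial>(lborel::'a measure))
      = (\<integral>\<^sup>+ \<xi>. ennreal (\<bar>c\<bar> ^ DIM('a)) * ennreal (1 / (1 + (a * c ^ 4) * (norm \<xi>)^4)) \<partial>(lborel::'a measure))"
    using \<open>c > 0\<close>
    by (subst lborel_affine[OF \<open>c > 0\<close>[THEN less_imp_neq, symmetric], of 0])
      (simp add: nn_integral_density nn_integral_distr power_mult_distrib mult.assoc)
  also have "\<dots> = ennreal (\<bar>c\<bar> ^ DIM('a)) * (\<integral>\<^sup>+ \<xi>. ennreal (1 / (1 + (norm (\<xi>::'a))^4)) \<partial>lborel)"
    by (simp add: c4 nn_integral_cmult)
  finally show ?thesis
    unfolding c_def using assms by (simp add: powr_power)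
qed

section \<open>Time integral of the symbol increment\<close>

definition causal_exp :: "real \<Rightarrow> real \<Rightarrow> real" where
  "causal_exp v \<tau> = (if \<tau> < 0 then 0 else exp (- \<tau> * v))"

lemma causal_exp_measurable [measurable]:
  assumes [measurable]: "f \<in> borel_measurable M" "g \<in> borel_measurable M"
  shows "(\<lambda>x. causal_exp (f x) (g x)) \<in> borel_measurable M"
  unfolding causal_exp_def by measurable

lemma nn_integral_exp_decay:
  assumes "v > 0"
  shows "(\<integral>\<^sup>+ s. ennreal (indicator {..c} s * exp (- 2 * (c - s) * v)) \<partial>lborel) = ennreal (1 / (2 * v))"
proof -
  interpret prob_space "density lborel (exponential_density (2 * v))"
    using assms by (intro prob_space_exponential_density) simp
  have "ennreal (indicator {..c} (c + (-1) * u) * exp (- 2 * (c - (c + (-1) * u)) * v))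
      = ennreal (1 / (2 * v)) * ennreal (exponential_density (2 * v) u)" for u
    using assms by (simp add: exponential_density_def indicator_def ennreal_mult[symmetric] mult_ac)
  then have "(\<integral>\<^sup>+ s. ennreal (indicator {..c} s * exp (- 2 * (c - s) * v)) \<partial>lborel)
      = ennreal (1 / (2 * v)) * (\<integral>\<^sup>+ u. ennreal (exponential_density (2 * v) u) \<partial>lborel)"
    using nn_integral_real_affine[of "\<lambda>s. ennreal (indicator {..c} s * exp (- 2 * (c - s) * v))" "-1" c]
    by (simp add: nn_integral_cmult)
  also have "(\<integral>\<^sup>+ u. ennreal (exponential_density (2 * v) u) \<partial>lborel) = 1"
    using emeasure_space_1 by (simp add: emeasure_density)
  finally show ?thesis
    by simp
qed

lemma nn_integral_exp_decay_before_le: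
  assumes "v \<ge> 0" "h > 0"
  shows "(\<integral>\<^sup>+ s. ennreal (indicator {..r} s * exp (- 2 * (r - s) * v) * (1 - exp (- h * v))\<^sup>2) \<partial>lborel)
       \<le> ennreal (h / (1 + h * v))"
proof (cases "v = 0")
  case False
  then have "v > 0"
    using assms by simp
  define D where "D = 1 - exp (- h * v)"
  have "0 \<le> D" "D \<le> 1" "D \<le> h * v"
    unfolding D_def using assms exp_ge_add_one_self[of "- h * v"] by auto
  then have "D * D \<le> D"
    by (intro mult_left_le)
  then have "D * D * (h * v) \<le> h * v"
    using assms \<open>D \<le> 1\<close> by (intro mult_left_le_one_le) simp_all
  then have "D\<^sup>2 * (1 + h * v) \<le> 2 * (h * v)"
    using \<open>D * D \<le> D\<close> \<open>D \<le> h * v\<close> unfolding power2_eq_square distrib_left by linarith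
  then have "D\<^sup>2 / (2 * v) \<le> h / (1 + h * v)"
    using \<open>v > 0\<close> assms by (simp add: field_simps add_pos_nonneg)
  moreover have "(\<integral>\<^sup>+ s. ennreal (indicator {..r} s * exp (- 2 * (r - s) * v) * D\<^sup>2) \<partial>lborel)
      = (\<integral>\<^sup>+ s. ennreal (indicator {..r} s * exp (- 2 * (r - s) * v)) * ennreal (D\<^sup>2) \<partial>lborel)"
    by (simp add: ennreal_mult'')
  moreover have "\<dots> = ennreal (1 / (2 * v)) * ennreal (D\<^sup>2)"
    by (subst nn_integral_multc) (simp_all only: nn_integral_exp_decay[OF \<open>v > 0\<close>], measurable)
  moreover have "\<dots> = ennreal (D\<^sup>2 / (2 * v))"
    using \<open>v > 0\<close> by (simp add: ennreal_mult[symmetric])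
  ultimately show ?thesis
    unfolding D_def by (simp add: ennreal_leI)
qed simp

lemma nn_integral_exp_decay_between_le:
  assumes "v \<ge> 0" "r < t"
  shows "(\<integral>\<^sup>+ s. ennreal (indicator {r<..t} s * exp (- 2 * (t - s) * v)) \<partial>lborel)
       \<le> ennreal (2 * (t - r) / (1 + (t - r) * v))"
proof (cases "(t - r) * v \<le> 1")
  case True
  have "(\<integral>\<^sup>+ s. ennreal (indicator {r<..t} s * exp (- 2 * (t - s) * v)) \<partial>lborel) \<le> (\<integral>\<^sup>+ s. indicator {r<..t} s \<partial>lborel)"
    using assms by (intro nn_integral_mono) (auto simp: indicator_def mult_nonpos_nonneg)
  also have "\<dots> = ennreal (t - r)"
    using assms by simp
  also have "\<dots> \<le> ennreal (2 * (t - r) / (1 + (t - r) * v))"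
  proof (intro ennreal_leI)
    have "(t - r) * (1 + (t - r) * v) \<le> (t - r) * 2"
      using True assms by (intro mult_left_mono) simp_all
    then show "t - r \<le> 2 * (t - r) / (1 + (t - r) * v)"
      using assms by (simp add: le_divide_eq add_pos_nonneg mult.commute)
  qed
  finally show ?thesis .
next
  case False
  then have "v > 0"
    using assms by (cases "v = 0") auto
  have "(\<integral>\<^sup>+ s. ennreal (indicator {r<..t} s * exp (- 2 * (t - s) * v)) \<partial>lborel)
      \<le> (\<integral>\<^sup>+ s. ennreal (indicator {..t} s * exp (- 2 * (t - s) * v)) \<partial>lborel)"
    by (intro nn_integral_mono ennreal_leI) (auto simp: indicator_def)
  also have "\<dots> = ennreal (1 / (2 * v))"
    by (rule nn_integral_exp_decay[OF \<open>v > 0\<close>])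
  also have "\<dots> \<le> ennreal (2 * (t - r) / (1 + (t - r) * v))"
    using False \<open>v > 0\<close> assms by (intro ennreal_leI) (simp add: field_simps)
  finally show ?thesis .
qed

lemma nn_integral_causal_exp_increment_le:
  assumes "v \<ge> 0" "r < t"
  shows "(\<integral>\<^sup>+ s. ennreal ((causal_exp v (t - s) - causal_exp v (r - s))\<^sup>2) * indicator {0..t} s \<partial>lborel)
       \<le> ennreal (3 * (t - r) / (1 + (t - r) * v))"
proof -
  define before where "before s = indicator {..r} s * exp (- 2 * (r - s) * v) * (1 - exp (- (t - r) * v))\<^sup>2" for s
  define between where "between s = indicator {r<..t} s * exp (- 2 * (t - s) * v)" for s
  have "(causal_exp v (t - s) - causal_exp v (r - s))\<^sup>2 = before s + between s" if "s \<le> t" for s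
  proof (cases "s \<le> r")
    case True
    have "exp (- (t - s) * v) = exp (- (r - s) * v) * exp (- (t - r) * v)"
      by (simp add: exp_add[symmetric] algebra_simps)
    moreover have "(exp (- (r - s) * v))\<^sup>2 = exp (- 2 * (r - s) * v)"
      by (simp add: power2_eq_square exp_add[symmetric] algebra_simps)
    ultimately show ?thesis
      using True assms by (simp add: causal_exp_def before_def between_def power2_eq_square algebra_simps)
  next
    case False
    then show ?thesis
      using that by (simp add: causal_exp_def before_def between_def power2_eq_square exp_add[symmetric] algebra_simps)
  qed
  then have "ennreal ((causal_exp v (t - s) - causal_exp v (r - s))\<^sup>2) * indicator {0..t} s
      \<le> ennreal (before s) + ennreal (between s)" for s
    by (cases "s \<in> {0..t}") (simp_all add: before_def between_def ennreal_plus)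
  then have "(\<integral>\<^sup>+ s. ennreal ((causal_exp v (t - s) - causal_exp v (r - s))\<^sup>2) * indicator {0..t} s \<partial>lborel)
      \<le> (\<integral>\<^sup>+ s. ennreal (before s) \<partial>lborel) + (\<integral>\<^sup>+ s. ennreal (between s) \<partial>lborel)"
    unfolding before_def between_def by (simp add: nn_integral_add[symmetric] nn_integral_mono)
  also have "\<dots> \<le> ennreal ((t - r) / (1 + (t - r) * v)) + ennreal (2 * (t - r) / (1 + (t - r) * v))"
    unfolding before_def between_def using assms
    by (intro add_mono nn_integral_exp_decay_before_le nn_integral_exp_decay_between_le) simp_all
  also have "\<dots> = ennreal (3 * (t - r) / (1 + (t - r) * v))"
    using assms by (simp add: ennreal_plus[symmetric] add_divide_distrib[symmetric] add_pos_nonneg del: ennreal_plus)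
  finally show ?thesis .
qed

section \<open>Kernels with quartically growing symbols\<close>

definition fourier_kernel :: "('a::euclidean_space \<Rightarrow> real) \<Rightarrow> real \<Rightarrow> 'a \<Rightarrow> real" where
  "fourier_kernel \<psi> \<tau> x = (1 / (2 * pi) ^ DIM('a)) * (\<integral>\<xi>. causal_exp (\<psi> \<xi>) \<tau> * cos (\<xi> \<bullet> x) \<partial>lborel)"

lemma exp_minus_le_inverse: "0 \<le> (z::real) \<Longrightarrow> exp (- z) \<le> 1 / (1 + z)"
  using exp_ge_add_one_self[of z] by (simp add: exp_minus field_simps)

lemma time_scaling_powr_le:
  fixes h T V Q \<kappa> d :: real
  assumes h: "0 < h" "h \<le> T" and "0 \<le> V" "\<kappa> > 0" "0 \<le> d"
  shows "h * (V + (h * \<kappa>) powr (- d / 4) * Q) \<le> (V * T powr (d / 4) + \<kappa> powr (- d / 4) * Q) * h powr ((4 - d) / 4)"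
proof -
  have "h * V = V * h powr (d / 4) * h powr ((4 - d) / 4)"
    using h by (simp add: powr_add[symmetric] add_divide_distrib[symmetric] mult_ac)
  also have "\<dots> \<le> V * T powr (d / 4) * h powr ((4 - d) / 4)"
    using assms by (intro mult_right_mono mult_left_mono powr_mono2) simp_all
  finally have V_part: "h * V \<le> V * T powr (d / 4) * h powr ((4 - d) / 4)" .
  have "h * h powr (- d / 4) = h powr ((4 - d) / 4)"
    using h powr_mult_base[of h "- d / 4"] by (simp add: field_simps)
  then have Q_part: "h * ((h * \<kappa>) powr (- d / 4) * Q) = \<kappa> powr (- d / 4) * Q * h powr ((4 - d) / 4)"
    using assms by (simp add: powr_mult mult_ac)
  show ?thesis
    unfolding distrib_left distrib_right Q_part using V_part by simp
qed

locale quartic_growth =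
  fixes \<psi> :: "'a::euclidean_space \<Rightarrow> real" and \<kappa> R :: real
  assumes measurable_symbol [measurable]: "\<psi> \<in> borel_measurable borel"
    and symbol_nonneg: "\<And>\<xi>. 0 \<le> \<psi> \<xi>"
    and growth_pos: "\<kappa> > 0"
    and symbol_growth: "\<And>\<xi>. R \<le> norm \<xi> \<Longrightarrow> \<kappa> * (norm \<xi>)^4 \<le> \<psi> \<xi>"
    and dim_le_3: "DIM('a) \<le> 3"
begin

lemma inverse_symbol_le:
  assumes "\<tau> > 0"
  shows "1 / (1 + \<tau> * \<psi> \<xi>) \<le> indicator (cball 0 R) \<xi> + 1 / (1 + (\<tau> * \<kappa>) * (norm \<xi>)^4)"
proof (cases "norm \<xi> \<le> R")
  case True
  have "1 / (1 + \<tau> * \<psi> \<xi>) \<le> 1"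
    using assms symbol_nonneg[of \<xi>] by (simp add: divide_le_eq_1 add_pos_nonneg)
  moreover have "0 \<le> 1 / (1 + (\<tau> * \<kappa>) * (norm \<xi>)^4)"
    using assms growth_pos by simp
  moreover have "indicator (cball 0 R) \<xi> = (1::real)"
    using True by (simp add: indicator_def)
  ultimately show ?thesis
    by linarith
next
  case False
  have "\<tau> * (\<kappa> * (norm \<xi>)^4) \<le> \<tau> * \<psi> \<xi>"
    using symbol_growth[of \<xi>] False assms by simp
  then show ?thesis
    using False assms growth_pos by (simp add: indicator_def frac_le add_pos_nonneg mult.assoc)
qed

lemma nn_integral_inverse_symbol_le:
  assumes "\<tau> > 0"
  shows "(\<integral>\<^sup>+ \<xi>. ennreal (1 / (1 + \<tau> * \<psi> \<xi>)) \<partial>lborel)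
       \<le> emeasure lborel (cball (0::'a) R)
         + ennreal ((\<tau> * \<kappa>) powr (- DIM('a) / 4)) * (\<integral>\<^sup>+ \<xi>. ennreal (1 / (1 + (norm (\<xi>::'a))^4)) \<partial>lborel)"
proof -
  have "(\<integral>\<^sup>+ \<xi>. ennreal (1 / (1 + \<tau> * \<psi> \<xi>)) \<partial>lborel)
      \<le> (\<integral>\<^sup>+ \<xi>. indicator (cball 0 R) \<xi> + ennreal (1 / (1 + (\<tau> * \<kappa>) * (norm (\<xi>::'a))^4)) \<partial>lborel)"
    using assms growth_pos
    by (intro nn_integral_mono)
      (simp add: ennreal_indicator[symmetric] ennreal_plus[symmetric] ennreal_leI inverse_symbol_le del: ennreal_plus)
  also have "\<dots> = emeasure lborel (cball (0::'a) R) + (\<integral>\<^sup>+ \<xi>. ennreal (1 / (1 + (\<tau> * \<kappa>) * (norm (\<xi>::'a))^4)) \<partial>lborel)"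
    by (subst nn_integral_add) (auto intro!: borel_measurable_indicator borel_closed)
  finally show ?thesis
    using assms growth_pos by (simp add: nn_integral_inverse_quartic_scale)
qed

lemma nn_integral_inverse_symbol_finite:
  assumes "\<tau> > 0"
  shows "(\<integral>\<^sup>+ \<xi>. ennreal (1 / (1 + \<tau> * \<psi> \<xi>)) \<partial>lborel) < \<infinity>"
  using nn_integral_inverse_symbol_le[OF assms] emeasure_lborel_cball_finite[of "0::'a" R]
    nn_integral_inverse_quartic_finite[OF dim_le_3]
  by (simp add: ennreal_mult_less_top order.strict_trans1)

lemma integrable_causal_exp_symbol:
  assumes "\<tau> \<noteq> 0"
  shows "integrable lborel (\<lambda>\<xi>. causal_exp (\<psi> \<xi>) \<tau>)"
proof (cases "\<tau> < 0")
  case False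
  then have "\<tau> > 0"
    using assms by simp
  show ?thesis
  proof (rule integrableI_bounded)
    have "(\<integral>\<^sup>+ \<xi>. ennreal (norm (causal_exp (\<psi> \<xi>) \<tau>)) \<partial>lborel) \<le> (\<integral>\<^sup>+ \<xi>. ennreal (1 / (1 + \<tau> * \<psi> \<xi>)) \<partial>lborel)"
      using \<open>\<tau> > 0\<close> symbol_nonneg
      by (intro nn_integral_mono ennreal_leI) (simp add: causal_exp_def exp_minus_le_inverse)
    then show "(\<integral>\<^sup>+ \<xi>. ennreal (norm (causal_exp (\<psi> \<xi>) \<tau>)) \<partial>lborel) < \<infinity>"
      using nn_integral_inverse_symbol_finite[OF \<open>\<tau> > 0\<close>] by (simp add: order.strict_trans1)
  qed (simp add: causal_exp_def)
qed (simp add: causal_exp_def)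

lemma nn_integral_fourier_kernel_diff_le:
  assumes "\<tau>\<^sub>1 \<noteq> 0" "\<tau>\<^sub>2 \<noteq> 0"
  shows "(\<integral>\<^sup>+x. ennreal ((fourier_kernel \<psi> \<tau>\<^sub>1 x - fourier_kernel \<psi> \<tau>\<^sub>2 x)\<^sup>2) \<partial>lborel)
       \<le> ennreal (1 / (2 * pi) ^ DIM('a)) * (\<integral>\<^sup>+\<xi>. ennreal ((causal_exp (\<psi> \<xi>) \<tau>\<^sub>1 - causal_exp (\<psi> \<xi>) \<tau>\<^sub>2)\<^sup>2) \<partial>lborel)"
proof -
  define c :: real where "c = 1 / (2 * pi) ^ DIM('a)"
  define f where "f \<xi> = causal_exp (\<psi> \<xi>) \<tau>\<^sub>1 - causal_exp (\<psi> \<xi>) \<tau>\<^sub>2" for \<xi>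
  define X where "X x = (\<integral>\<xi>. f \<xi> * cos (\<xi> \<bullet> x) \<partial>lborel)" for x
  have integrable1: "integrable lborel (\<lambda>\<xi>. causal_exp (\<psi> \<xi>) \<tau>\<^sub>1)"
    and integrable2: "integrable lborel (\<lambda>\<xi>. causal_exp (\<psi> \<xi>) \<tau>\<^sub>2)"
    using assms by (simp_all add: integrable_causal_exp_symbol)
  then have f_integrable: "integrable lborel f"
    unfolding f_def by simp
  have [measurable]: "X \<in> borel_measurable borel"
    unfolding X_def f_def by measurable
  have "fourier_kernel \<psi> \<tau>\<^sub>1 x - fourier_kernel \<psi> \<tau>\<^sub>2 x = c * X x" for x
    unfolding fourier_kernel_def c_def X_def f_def
    using integrable_mult_cos[OF integrable1] integrable_mult_cos[OF integrable2]
    by (simp add: right_diff_distrib[symmetric] left_diff_distrib diff_divide_distrib)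
  then have "(\<integral>\<^sup>+x. ennreal ((fourier_kernel \<psi> \<tau>\<^sub>1 x - fourier_kernel \<psi> \<tau>\<^sub>2 x)\<^sup>2) \<partial>lborel)
      = ennreal (c\<^sup>2) * (\<integral>\<^sup>+x. ennreal ((X x)\<^sup>2) \<partial>lborel)"
    by (simp add: power_mult_distrib ennreal_mult nn_integral_cmult)
  also have "\<dots> \<le> ennreal (c\<^sup>2) * ((2 * pi) ^ DIM('a) * (\<integral>\<^sup>+\<xi>. ennreal ((f \<xi>)\<^sup>2) \<partial>lborel))"
    unfolding X_def by (intro mult_left_mono plancherel_cos_le[OF f_integrable]) simp
  also have "\<dots> = ennreal (c\<^sup>2 * (2 * pi) ^ DIM('a)) * (\<integral>\<^sup>+\<xi>. ennreal ((f \<xi>)\<^sup>2) \<partial>lborel)"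
    by (simp add: ennreal_mult mult.assoc)
  also have "c\<^sup>2 * (2 * pi) ^ DIM('a) = c"
    by (simp add: c_def power2_eq_square)
  finally show ?thesis
    unfolding c_def f_def .
qed

lemma nn_integral_symbol_resolvent_bound:
  assumes "T > 0"
  obtains C where "C \<ge> 0"
    and "\<And>h. 0 < h \<Longrightarrow> h \<le> T \<Longrightarrow>
           (\<integral>\<^sup>+ \<xi>. ennreal (h / (1 + h * \<psi> \<xi>)) \<partial>lborel) \<le> ennreal (C * h powr ((4 - real DIM('a)) / 4))"
proof
  define d where "d = real DIM('a)"
  define V where "V = measure lborel (cball (0::'a) R)"
  define Q where "Q = enn2real (\<integral>\<^sup>+ \<xi>. ennreal (1 / (1 + (norm (\<xi>::'a))^4)) \<partial>lborel)"
  have V: "emeasure lborel (cball (0::'a) R) = ennreal V" and Q: "(\<integral>\<^sup>+ \<xi>. ennreal (1 / (1 + (norm (\<xi>::'a))^4)) \<partial>lborel) = ennreal Q"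
    unfolding V_def Q_def
    using emeasure_lborel_cball_finite[of "0::'a" R] nn_integral_inverse_quartic_finite[OF dim_le_3]
    by (simp_all add: emeasure_eq_ennreal_measure ennreal_enn2real less_top)
  have "V \<ge> 0" "Q \<ge> 0"
    by (simp_all add: V_def Q_def)
  show "V * T powr (d / 4) + \<kappa> powr (- d / 4) * Q \<ge> 0"
    using \<open>V \<ge> 0\<close> \<open>Q \<ge> 0\<close> by simp
  fix h :: real
  assume h: "0 < h" "h \<le> T"
  have "ennreal (h / (1 + h * \<psi> \<xi>)) = ennreal h * ennreal (1 / (1 + h * \<psi> \<xi>))" for \<xi>
    using h symbol_nonneg[of \<xi>] by (simp add: ennreal_mult[symmetric])
  then have "(\<integral>\<^sup>+ \<xi>. ennreal (h / (1 + h * \<psi> \<xi>)) \<partial>lborel) = ennreal h * (\<integral>\<^sup>+ \<xi>. ennreal (1 / (1 + h * \<psi> \<xi>)) \<partial>lborel)"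
    by (simp add: nn_integral_cmult)
  also have "\<dots> \<le> ennreal h * ennreal (V + (h * \<kappa>) powr (- d / 4) * Q)"
    using nn_integral_inverse_symbol_le[OF h(1)] \<open>V \<ge> 0\<close> \<open>Q \<ge> 0\<close>
    by (intro mult_left_mono) (simp_all add: V Q d_def ennreal_mult ennreal_plus)
  also have "\<dots> = ennreal (h * (V + (h * \<kappa>) powr (- d / 4) * Q))"
    using h \<open>V \<ge> 0\<close> \<open>Q \<ge> 0\<close> by (simp add: ennreal_mult)
  also have "\<dots> \<le> ennreal ((V * T powr (d / 4) + \<kappa> powr (- d / 4) * Q) * h powr ((4 - d) / 4))"
    using h \<open>V \<ge> 0\<close> growth_pos by (intro ennreal_leI time_scaling_powr_le) (simp_all add: d_def)
  finally show "(\<integral>\<^sup>+ \<xi>. ennreal (h / (1 + h * \<psi> \<xi>)) \<partial>lborel)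
      \<le> ennreal ((V * T powr (d / 4) + \<kappa> powr (- d / 4) * Q) * h powr ((4 - real DIM('a)) / 4))"
    by (simp add: d_def)
qed

lemma nn_integral_fourier_kernel_increment_le:
  assumes "r < t"
  shows "(\<integral>\<^sup>+ s \<in> {0..t}. (\<integral>\<^sup>+ x. ennreal ((fourier_kernel \<psi> (t - s) x - fourier_kernel \<psi> (r - s) x)\<^sup>2) \<partial>lborel) \<partial>lborel)
       \<le> ennreal (1 / (2 * pi) ^ DIM('a)) *
         (\<integral>\<^sup>+ \<xi>. ennreal (3 * (t - r) / (1 + (t - r) * \<psi> \<xi>)) \<partial>lborel)"
proof -
  define c :: real where "c = 1 / (2 * pi) ^ DIM('a)"
  define Q where "Q s \<xi> = ennreal ((causal_exp (\<psi> \<xi>) (t - s) - causal_exp (\<psi> \<xi>) (r - s))\<^sup>2) * indicator {0..t} s"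
    for s and \<xi> :: 'a
  have [measurable]: "case_prod Q \<in> borel_measurable (lborel \<Otimes>\<^sub>M lborel)"
    unfolding Q_def by measurable
  \<comment> \<open>At \<open>s = r\<close> the symbol \<open>exp (- 0 * \<psi> \<xi>)\<close> is not integrable and the kernel is the junk value 0,
    so Plancherel is only applied off \<open>{r, t}\<close>.\<close>
  have pointwise: "(\<integral>\<^sup>+ x. ennreal ((fourier_kernel \<psi> (t - s) x - fourier_kernel \<psi> (r - s) x)\<^sup>2) \<partial>lborel) * indicator {0..t} s
      \<le> ennreal c * (\<integral>\<^sup>+ \<xi>. Q s \<xi> \<partial>lborel)" if "s \<noteq> r" "s \<noteq> t" for s
  proof (cases "s \<in> {0..t}")
    case True
    then show ?thesis
      using nn_integral_fourier_kernel_diff_le[of "t - s" "r - s"] that by (simp add: Q_def c_def)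
  qed (simp add: Q_def)
  have "AE s in lborel. s \<noteq> r" "AE s in lborel. s \<noteq> t"
    by (simp_all add: AE_lborel_singleton)
  then have "AE s in lborel. (\<integral>\<^sup>+ x. ennreal ((fourier_kernel \<psi> (t - s) x - fourier_kernel \<psi> (r - s) x)\<^sup>2) \<partial>lborel) * indicator {0..t} s
      \<le> ennreal c * (\<integral>\<^sup>+ \<xi>. Q s \<xi> \<partial>lborel)"
    by eventually_elim (rule pointwise)
  then have "(\<integral>\<^sup>+ s \<in> {0..t}. (\<integral>\<^sup>+ x. ennreal ((fourier_kernel \<psi> (t - s) x - fourier_kernel \<psi> (r - s) x)\<^sup>2) \<partial>lborel) \<partial>lborel)
      \<le> (\<integral>\<^sup>+ s. ennreal c * (\<integral>\<^sup>+ \<xi>. Q s \<xi> \<partial>lborel) \<partial>lborel)"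
    by (rule nn_integral_mono_AE)
  also have "\<dots> = ennreal c * (\<integral>\<^sup>+ \<xi>. (\<integral>\<^sup>+ s. Q s \<xi> \<partial>lborel) \<partial>lborel)"
    by (subst lborel_pair.Fubini') (simp_all add: nn_integral_cmult)
  also have "\<dots> \<le> ennreal c * (\<integral>\<^sup>+ \<xi>. ennreal (3 * (t - r) / (1 + (t - r) * \<psi> \<xi>)) \<partial>lborel)"
    unfolding Q_def using assms symbol_nonneg
    by (intro mult_left_mono nn_integral_mono nn_integral_causal_exp_increment_le) simp_all
  finally show ?thesis
    unfolding c_def .
qed

theorem fourier_kernel_increment_bound:
  assumes "T > 0"
  shows "\<exists>C. \<forall>r t. 0 < r \<and> r < t \<and> t \<le> T \<longrightarrow>
           (\<integral>\<^sup>+ s \<in> {0..t}. (\<integral>\<^sup>+ x. ennreal ((fourier_kernel \<psi> (t - s) x - fourier_kernel \<psi> (r - s) x)\<^sup>2) \<partial>lborel) \<partial>lborel)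
           \<le> ennreal (C * (t - r) powr ((4 - real DIM('a)) / 4))"
proof -
  obtain C where "C \<ge> 0" and C: "\<And>h. 0 < h \<Longrightarrow> h \<le> T \<Longrightarrow>
      (\<integral>\<^sup>+ \<xi>. ennreal (h / (1 + h * \<psi> \<xi>)) \<partial>lborel) \<le> ennreal (C * h powr ((4 - real DIM('a)) / 4))"
    using nn_integral_symbol_resolvent_bound[OF assms] by blast
  define c :: real where "c = 1 / (2 * pi) ^ DIM('a)"
  have "(\<integral>\<^sup>+ s \<in> {0..t}. (\<integral>\<^sup>+ x. ennreal ((fourier_kernel \<psi> (t - s) x - fourier_kernel \<psi> (r - s) x)\<^sup>2) \<partial>lborel) \<partial>lborel)
      \<le> ennreal (3 * c * C * (t - r) powr ((4 - real DIM('a)) / 4))"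
    if "0 < r" "r < t" "t \<le> T" for r t
  proof -
    have scale: "ennreal (3 * (t - r) / y) = 3 * ennreal ((t - r) / y)" for y
      by (subst times_divide_eq_right[symmetric], subst ennreal_mult') simp_all
    have "(\<integral>\<^sup>+ \<xi>. ennreal (3 * (t - r) / (1 + (t - r) * \<psi> \<xi>)) \<partial>lborel)
        = 3 * (\<integral>\<^sup>+ \<xi>. ennreal ((t - r) / (1 + (t - r) * \<psi> \<xi>)) \<partial>lborel)"
      unfolding scale by (rule nn_integral_cmult) measurable
    also have "\<dots> \<le> 3 * ennreal (C * (t - r) powr ((4 - real DIM('a)) / 4))"
      using that by (intro mult_left_mono C) simp_all
    also have "\<dots> = ennreal (3 * (C * (t - r) powr ((4 - real DIM('a)) / 4)))"
      by (subst ennreal_mult') simp_all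
    finally have "ennreal c * (\<integral>\<^sup>+ \<xi>. ennreal (3 * (t - r) / (1 + (t - r) * \<psi> \<xi>)) \<partial>lborel)
        \<le> ennreal c * ennreal (3 * (C * (t - r) powr ((4 - real DIM('a)) / 4)))"
      by (rule mult_left_mono) simp
    also have "\<dots> = ennreal (3 * c * C * (t - r) powr ((4 - real DIM('a)) / 4))"
      by (subst ennreal_mult'[symmetric]) (simp_all add: c_def mult_ac)
    finally show ?thesis
      using nn_integral_fourier_kernel_increment_le[OF \<open>r < t\<close>] unfolding c_def by (rule order_trans[rotated])
  qed
  then show ?thesis
    by blast
qed

end

lemma K_LKS_eq_fourier_kernel: "K_LKS = fourier_kernel (\<lambda>\<xi>. (- 2 + (norm \<xi>)\<^sup>2)\<^sup>2 / 8)"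
  by (intro ext) (simp add: K_LKS_def fourier_kernel_def causal_exp_def)

lemma K_SFO_eq_fourier_kernel: "K_SFO = fourier_kernel (\<lambda>\<xi>. (norm \<xi>)^4 / 8)"
  by (intro ext) (simp add: K_SFO_def fourier_kernel_def causal_exp_def)

lemma quartic_growth_LKS:
  assumes "CARD('n::finite) \<le> 3"
  shows "quartic_growth (\<lambda>\<xi>::real ^ 'n. (- 2 + (norm \<xi>)\<^sup>2)\<^sup>2 / 8) (1 / 32) 2"
proof
  fix \<xi> :: "real ^ 'n"
  assume "2 \<le> norm \<xi>"
  then have "(norm \<xi>)\<^sup>2 / 2 \<le> - 2 + (norm \<xi>)\<^sup>2"
    using power_mono[of 2 "norm \<xi>" 2] by simp
  then have "((norm \<xi>)\<^sup>2 / 2)\<^sup>2 \<le> (- 2 + (norm \<xi>)\<^sup>2)\<^sup>2"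
    by (intro power_mono) simp_all
  then show "1 / 32 * (norm \<xi>)^4 \<le> (- 2 + (norm \<xi>)\<^sup>2)\<^sup>2 / 8"
    by (simp add: power_divide power2_eq_square[symmetric] power_mult[symmetric])
qed (use assms in simp_all)

lemma quartic_growth_SFO:
  assumes "CARD('n::finite) \<le> 3"
  shows "quartic_growth (\<lambda>\<xi>::real ^ 'n. (norm \<xi>)^4 / 8) (1 / 8) 0"
  by standard (use assms in simp_all)

theorem lemma3p2:
  fixes T :: real
  assumes "T > 0"
    and "CARD('n::finite) \<in> {1, 2, 3}"
  shows "(\<exists>C::real. \<forall>r t. 0 < r \<and> r < t \<and> t \<le> T \<longrightarrow>
            (\<integral>\<^sup>+ s \<in> {0..t}. (\<integral>\<^sup>+ x.
               ennreal ((K_LKS (t - s) (x :: real ^ 'n) - K_LKS (r - s) x)^2) \<partial>lborel) \<partial>lborel)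
            \<le> ennreal (C * (t - r) powr ((4 - real CARD('n)) / 4)))
       \<and> (\<exists>C::real. \<forall>r t. 0 < r \<and> r < t \<and> t \<le> T \<longrightarrow>
            (\<integral>\<^sup>+ s \<in> {0..t}. (\<integral>\<^sup>+ x.
               ennreal ((K_SFO (t - s) (x :: real ^ 'n) - K_SFO (r - s) x)^2) \<partial>lborel) \<partial>lborel)
            \<le> ennreal (C * (t - r) powr ((4 - real CARD('n)) / 4)))"
proof -
  have "CARD('n) \<le> 3"
    using assms(2) by auto
  note LKS = quartic_growth.fourier_kernel_increment_bound[OF quartic_growth_LKS[OF this] \<open>T > 0\<close>]
  note SFO = quartic_growth.fourier_kernel_increment_bound[OF quartic_growth_SFO[OF \<open>CARD('n) \<le> 3\<close>] \<open>T > 0\<close>]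
  show ?thesis
    unfolding K_LKS_eq_fourier_kernel K_SFO_eq_fourier_kernel using LKS SFO by simp
qed

end
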